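(* Let $X\subseteq\mathbb{R}^n$ be nonempty, compact and convex; $F:X\to\mathbb{R}^n$ $L_F$-Lipschitz continuous and monotone on $X$; $f:X\to\mathbb{R}$ real-valued, possibly nonconvex, and $L$-smooth on $X$; and $\mathrm{VI}(X,F)$ $\alpha$-weakly sharp of order $\mathcal{M}\ge1$. Let $\{\hat x_k\}$ be generated by the IPR-EG method described in the context, with outer stepsize $\hat\gamma\le\frac1{2L}$. Then for all $k\ge0$, $\|G_{1/\hat\gamma}(\hat x_k)\|^2\le\frac4{\hat\gamma}(f(\hat x_k)-f(\hat x_{k+1}))+L\hat\gamma C_f^2+\frac{80}{L\hat\gamma^3}(\|\delta_k\|^2+\|e_k\|^2)$.
   Context: $X^*_F=\mathrm{SOL}(X,F)=\{x\in X: F(x)^\top(y-x)\ge0\ \forall y\in X\}$, $\Pi_Y$ Euclidean projection, $\mathrm{dist}(x,Y)=\|x-\Pi_Y[x]\|$. Weak sharpness of order $\mathcal{M}$: $F(x^* )^\top(x-x^* )\ge\alpha\,\mathrm{dist}^{\mathcal{M}}(x,X^*_F)$ for all $x\in X$, $x^*\in X^*_F$, with $\alpha>0$. $C_f=\sup_{x\in X}\|\nabla f(x)\|$. Residual mapping: $G_{1/\hat\gamma}(x)=\frac1{\hat\gamma}(x-\Pi_{X^*_F}[x-\hat\gamma\nabla f(x)])$. IPR-EG: given $\hat x_0\in X$, outer stepsize $\hat\gamma$, inner stepsize $\gamma>0$, regularization $\eta_k>0$, inner counts $T_k$; at outer iteration $k$ set $z_k=\hat x_k-\hat\gamma\nabla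 f(\hat x_k)$ and run $T_k$ steps of $y_{k,t+1}=\Pi_X[x_{k,t}-\gamma(F(x_{k,t})+\eta_k(x_{k,t}-z_k))]$, $x_{k,t+1}=\Pi_X[x_{k,t}-\gamma(F(y_{k,t+1})+\eta_k(y_{k,t+1}-z_k))]$, $\bar y_{k,t+1}=(\Gamma_{k,t}\bar y_{k,t}+\theta_{k,t}y_{k,t+1})/\Gamma_{k,t+1}$, $\Gamma_{k,0}=0$, $\Gamma_{k,t+1}=\Gamma_{k,t}+\theta_{k,t}$, $\theta_{k,0}=\frac1{1-0.5\gamma\eta_k}$, $\theta_{k,t+1}=\frac{\theta_{k,t}}{1-0.5\gamma\eta_k}$; then $\hat x_{k+1}=\bar y_{k,T_k}$, $x_{k+1,0}=\bar y_{k+1,0}=\bar y_{k,T_k}$ ($x_{0,0},\bar y_{0,0}\in X$ given). Errors: $\delta_k=\hat x_{k+1}-\Pi_{X^*_F}[z_k]$, $e_k=\hat x_k-\Pi_{X^*_F}[\hat x_k]$. *)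

theory Defs
  imports "HOL-Analysis.Analysis"
begin

definition SOL :: "('a::euclidean_space) set \<Rightarrow> ('a \<Rightarrow> 'a) \<Rightarrow> 'a set" where
  "SOL X F = {x \<in> X. \<forall>y\<in>X. F x \<bullet> (y - x) \<ge> 0}"

abbreviation proj :: "('a::euclidean_space) set \<Rightarrow> 'a \<Rightarrow> 'a" where
  "proj Y x \<equiv> closest_point Y x"

definition dist_set :: "('a::euclidean_space) \<Rightarrow> 'a set \<Rightarrow> real" where
  "dist_set x Y = norm (x - proj Y x)"

definition monotone_op_on :: "('a::euclidean_space) set \<Rightarrow> ('a \<Rightarrow> 'a) \<Rightarrow> bool" where
  "monotone_op_on X F \<longleftrightarrow> (\<forall>x\<in>X. \<forall>y\<in>X. (F x - F y) \<bullet> (x - y) \<ge> 0)"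

definition weakly_sharp :: "('a::euclidean_space) set \<Rightarrow> ('a \<Rightarrow> 'a) \<Rightarrow> real \<Rightarrow> real \<Rightarrow> bool" where
  "weakly_sharp X F \<alpha> M \<longleftrightarrow> \<alpha> > 0 \<and>
     (\<forall>x\<in>X. \<forall>xs\<in>SOL X F. F xs \<bullet> (x - xs) \<ge> \<alpha> * (dist_set x (SOL X F)) powr M)"

definition L_smooth_on :: "('a::euclidean_space) set \<Rightarrow> ('a \<Rightarrow> real) \<Rightarrow> ('a \<Rightarrow> 'a) \<Rightarrow> real \<Rightarrow> bool" where
  "L_smooth_on X f grad L \<longleftrightarrow>
     (\<forall>x\<in>X. (f has_derivative (\<lambda>h. grad x \<bullet> h)) (at x within X)) \<and>
     (\<forall>x\<in>X. \<forall>y\<in>X. norm (grad x - grad y) \<le> L * norm (x - y))"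

definition Cf :: "('a::euclidean_space) set \<Rightarrow> ('a \<Rightarrow> 'a) \<Rightarrow> real" where
  "Cf X grad = (SUP x\<in>X. norm (grad x))"

definition residual :: "('a::euclidean_space) set \<Rightarrow> ('a \<Rightarrow> 'a) \<Rightarrow> ('a \<Rightarrow> 'a) \<Rightarrow> real \<Rightarrow> 'a \<Rightarrow> 'a" where
  "residual X F grad ghat x = (1 / ghat) *\<^sub>R (x - proj (SOL X F) (x - ghat *\<^sub>R grad x))"

text \<open>The IPR-EG iteration. xhat k = outer iterates; x k t, y k t, ybar k t inner iterates;
  Gam k t, th k t the averaging weights; eta k regularization; T k inner counts.\<close>
definition ipr_eg ::
  "('a::euclidean_space) set \<Rightarrow> ('a \<Rightarrow> 'a) \<Rightarrow> ('a \<Rightarrow> 'a) \<Rightarrow> real \<Rightarrow> real \<Rightarrow> (nat \<Rightarrow> real) \<Rightarrow> (nat \<Rightarrow> nat)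
   \<Rightarrow> (nat \<Rightarrow> 'a) \<Rightarrow> (nat \<Rightarrow> nat \<Rightarrow> 'a) \<Rightarrow> (nat \<Rightarrow> nat \<Rightarrow> 'a) \<Rightarrow> (nat \<Rightarrow> nat \<Rightarrow> 'a)
   \<Rightarrow> (nat \<Rightarrow> nat \<Rightarrow> real) \<Rightarrow> (nat \<Rightarrow> nat \<Rightarrow> real) \<Rightarrow> bool" where
  "ipr_eg X F grad ghat \<gamma> \<eta> T xhat x y ybar Gam th \<longleftrightarrow>
     xhat 0 \<in> X \<and> x 0 0 \<in> X \<and> ybar 0 0 \<in> X \<and>
     (\<forall>k. let z = xhat k - ghat *\<^sub>R grad (xhat k) in
        Gam k 0 = 0 \<and>
        th k 0 = 1 / (1 - 0.5 * \<gamma> * \<eta> k) \<and>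
        (\<forall>t. th k (Suc t) = th k t / (1 - 0.5 * \<gamma> * \<eta> k)) \<and>
        (\<forall>t. Gam k (Suc t) = Gam k t + th k t) \<and>
        (\<forall>t < T k.
           y k (Suc t) = proj X (x k t - \<gamma> *\<^sub>R (F (x k t) + \<eta> k *\<^sub>R (x k t - z))) \<and>
           x k (Suc t) = proj X (x k t - \<gamma> *\<^sub>R (F (y k (Suc t)) + \<eta> k *\<^sub>R (y k (Suc t) - z))) \<and>
           ybar k (Suc t) = (1 / Gam k (Suc t)) *\<^sub>R (Gam k t *\<^sub>R ybar k t + th k t *\<^sub>R y k (Suc t))) \<and>
        xhat (Suc k) = ybar k (T k) \<and>
        x (Suc k) 0 = ybar k (T k) \<and>
        ybar (Suc k) 0 = ybar k (T k))"

end

(* The estimate only concerns the two consecutive outer iterates x = xhat k and x' = xhat (k+1),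
   which lie in X because every inner average is a convex combination of points of X.
   Let p be the projection of x - ghat grad x onto SOL, which is closed and convex by Minty's
   reformulation of the variational inequality. The obtuse-angle property of this projection
   against the point proj x, combined with the descent lemma for f between x and x', bounds
   |x - p|^2; the cross terms are absorbed by Young's inequality using ghat L <= 1/2. *)

theory Submission
  imports Defs
begin

lemma L_smooth_on_descent:
  fixes X :: "'a::euclidean_space set"
  assumes "convex X" and smooth: "L_smooth_on X f grad L" and "x \<in> X" "y \<in> X"
  shows "f y \<le> f x + grad x \<bullet> (y - x) + L / 2 * (norm (y - x))\<^sup>2"
proof -
  define p where "p = (\<lambda>t::real. x + t *\<^sub>R (y - x))"
  have p_in: "p t \<in> X" if "t \<in> {0..1}" for t
    using convexD_alt[OF \<open>convex X\<close> \<open>x \<in> X\<close> \<open>y \<in> X\<close>, of t] that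
    by (simp add: p_def algebra_simps)
  \<comment> \<open>Subtracting the quadratic makes the derivative of \<open>h\<close> nonpositive on \<open>[0,1]\<close>.\<close>
  define h where "h = (\<lambda>t. f (p t) - t * (grad x \<bullet> (y - x)) - L / 2 * t\<^sup>2 * (norm (y - x))\<^sup>2)"
  have h_deriv: "(h has_derivative
      (\<lambda>s. s * ((grad (p t) - grad x) \<bullet> (y - x) - L * t * (norm (y - x))\<^sup>2))) (at t within {0..1})"
    if "0 \<le> t" "t \<le> 1" for t
  proof -
    have "(p has_derivative (\<lambda>s. s *\<^sub>R (y - x))) (at t within {0..1})"
      unfolding p_def by (auto intro!: derivative_eq_intros)
    moreover have "(f has_derivative (\<lambda>v. grad (p t) \<bullet> v)) (at (p t) within p ` {0..1})"
    proof (rule has_derivative_subset)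
      show "(f has_derivative (\<lambda>v. grad (p t) \<bullet> v)) (at (p t) within X)"
        using smooth p_in that unfolding L_smooth_on_def by simp
    qed (use p_in in auto)
    ultimately have "((\<lambda>t. f (p t)) has_derivative (\<lambda>s. grad (p t) \<bullet> (s *\<^sub>R (y - x))))
        (at t within {0..1})"
      using has_derivative_in_compose by fastforce
    then show ?thesis
      unfolding h_def
      by (auto intro!: derivative_eq_intros simp: algebra_simps)
  qed
  obtain t where t: "t \<in> {0<..<1}"
    and "h 1 - h 0 = (grad (p t) - grad x) \<bullet> (y - x) - L * t * (norm (y - x))\<^sup>2"
    using mvt_simple[of 0 1 h, OF _ h_deriv] by auto
  moreover have "(grad (p t) - grad x) \<bullet> (y - x) \<le> L * t * (norm (y - x))\<^sup>2"
  proof -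
    have "(grad (p t) - grad x) \<bullet> (y - x) \<le> norm (grad (p t) - grad x) * norm (y - x)"
      by (rule norm_cauchy_schwarz)
    also have "\<dots> \<le> L * norm (p t - x) * norm (y - x)"
      using smooth p_in[of t] t \<open>x \<in> X\<close> unfolding L_smooth_on_def by (auto intro!: mult_right_mono)
    also have "\<dots> = L * t * (norm (y - x))\<^sup>2"
      using t by (simp add: p_def power2_eq_square)
    finally show ?thesis .
  qed
  ultimately have "h 1 \<le> h 0" by simp
  then show ?thesis by (simp add: h_def p_def)
qed

lemma SOL_eq_Minty:
  fixes X :: "'a::euclidean_space set"
  assumes "convex X" and "continuous_on X F" and "monotone_op_on X F"
  shows "SOL X F = {x \<in> X. \<forall>y\<in>X. 0 \<le> F y \<bullet> (y - x)}"
proof (intro set_eqI iffI)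
  fix x assume "x \<in> SOL X F"
  then show "x \<in> {x \<in> X. \<forall>y\<in>X. 0 \<le> F y \<bullet> (y - x)}"
    using \<open>monotone_op_on X F\<close>
    unfolding SOL_def monotone_op_on_def by (fastforce simp: inner_diff_left)
next
  fix x assume x: "x \<in> {x \<in> X. \<forall>y\<in>X. 0 \<le> F y \<bullet> (y - x)}"
  have "0 \<le> F x \<bullet> (w - x)" if "w \<in> X" for w
  proof -
    define p where "p = (\<lambda>t::real. x + t *\<^sub>R (w - x))"
    have p_in: "p t \<in> X" if "t \<in> {0..1}" for t
      using convexD_alt[OF \<open>convex X\<close>, of x w t] x \<open>w \<in> X\<close> that
      by (simp add: p_def algebra_simps)
    have "continuous_on {0..1} (\<lambda>t. F (p t) \<bullet> (w - x))"
      unfolding p_def using p_in[unfolded p_def]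
      by (intro continuous_intros continuous_on_compose2[OF \<open>continuous_on X F\<close>]) auto
    moreover have "0 \<le> F (p t) \<bullet> (w - x)" if "t \<in> {0<..1}" for t
    proof -
      have "0 \<le> F (p t) \<bullet> (p t - x)" using x p_in that by auto
      then show ?thesis using that by (simp add: p_def zero_le_mult_iff)
    qed
    ultimately have "0 \<le> F (p 0) \<bullet> (w - x)"
      using continuous_ge_on_closure[of "{0<..1::real}" "\<lambda>t. F (p t) \<bullet> (w - x)" 0 0]
      by simp
    then show ?thesis by (simp add: p_def)
  qed
  then show "x \<in> SOL X F" using x unfolding SOL_def by auto
qed

lemma
  fixes X :: "'a::euclidean_space set"
  assumes "convex X" and "continuous_on X F" and "monotone_op_on X F"
  shows SOL_convex: "convex (SOL X F)"
    and SOL_closed: "closed X \<Longrightarrow> closed (SOL X F)"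
proof -
  have SOL_halfspaces: "SOL X F = X \<inter> (\<Inter>y\<in>X. {x. F y \<bullet> x \<le> F y \<bullet> y})"
    unfolding SOL_eq_Minty[OF assms] by (auto simp: inner_diff_right)
  show "convex (SOL X F)"
    unfolding SOL_halfspaces by (intro convex_Int \<open>convex X\<close> convex_INT ballI convex_halfspace_le)
  show "closed (SOL X F)" if "closed X"
    unfolding SOL_halfspaces by (intro closed_Int that closed_INT ballI closed_halfspace_le)
qed

text \<open>For \<open>S = {}\<close> both projections are the same junk value \<open>SOME y. False\<close>.\<close>
lemma closest_point_inner_le:
  fixes S :: "'a::euclidean_space set"
  assumes "closed S" and "convex S"
  shows "(z - closest_point S z) \<bullet> (closest_point S x - closest_point S z) \<le> 0"
proof (cases "S = {}")
  case False
  then show ?thesis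
    using closest_point_dot[OF assms(2,1) closest_point_in_set[OF assms(1) False]] by simp
qed (simp add: closest_point_def)

lemma convex_weighted_mean_in:
  assumes "convex S" and "a \<in> S" and "b \<in> S" and "0 \<le> p" and "0 < q"
  shows "(1 / (p + q)) *\<^sub>R (p *\<^sub>R a + q *\<^sub>R b) \<in> S"
proof -
  have "(1 / (p + q)) *\<^sub>R (p *\<^sub>R a + q *\<^sub>R b) = (p / (p + q)) *\<^sub>R a + (q / (p + q)) *\<^sub>R b"
    by (simp add: scaleR_add_right)
  moreover have "p / (p + q) + q / (p + q) = 1"
    using assms(4,5) by (simp add: add_divide_distrib[symmetric])
  ultimately show ?thesis
    using convexD[OF assms(1-3)] assms(4,5) by simp
qed

lemma ipr_eg_outer_iterates_in:
  fixes X :: "'a::euclidean_space set"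
  assumes "X \<noteq> {}" and "closed X" and "convex X" and "\<And>k. \<gamma> * \<eta> k < 2"
    and ipr: "ipr_eg X F grad ghat \<gamma> \<eta> T xhat x y ybar Gam th"
  shows "xhat k \<in> X"
proof -
  have th_pos: "0 < th k t" for k t
  proof (induction t)
    case 0
    have "th k 0 = 1 / (1 - 0.5 * \<gamma> * \<eta> k)"
      using ipr unfolding ipr_eg_def Let_def by blast
    then show ?case using assms(4)[of k] by simp
  next
    case (Suc t)
    have "th k (Suc t) = th k t / (1 - 0.5 * \<gamma> * \<eta> k)"
      using ipr unfolding ipr_eg_def Let_def by blast
    then show ?case using Suc assms(4)[of k] by simp
  qed
  have Gam_nonneg: "0 \<le> Gam k t" for k t
  proof (induction t)
    case 0
    show ?case using ipr unfolding ipr_eg_def Let_def by simp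
  next
    case (Suc t)
    have "Gam k (Suc t) = Gam k t + th k t"
      using ipr unfolding ipr_eg_def Let_def by blast
    then show ?case using Suc th_pos[of k t] by simp
  qed
  have inner_step: "ybar k (Suc t) \<in> X" if "t < T k" and "ybar k t \<in> X" for k t
  proof -
    have "y k (Suc t) \<in> closest_point X ` UNIV"
      and "ybar k (Suc t) = (1 / (Gam k t + th k t)) *\<^sub>R (Gam k t *\<^sub>R ybar k t + th k t *\<^sub>R y k (Suc t))"
      using ipr \<open>t < T k\<close> unfolding ipr_eg_def Let_def by auto
    moreover have "closest_point X z \<in> X" for z
      using closest_point_in_set[OF \<open>closed X\<close> \<open>X \<noteq> {}\<close>] .
    ultimately show ?thesis
      using convex_weighted_mean_in[OF \<open>convex X\<close> \<open>ybar k t \<in> X\<close>] Gam_nonneg th_pos by auto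
  qed
  have inner_iterates: "ybar k t \<in> X" if "ybar k 0 \<in> X" and "t \<le> T k" for k t
    using that(2) by (induction t) (auto intro: inner_step that(1))
  have "xhat k \<in> X \<and> ybar k 0 \<in> X"
  proof (induction k)
    case 0
    show ?case using ipr unfolding ipr_eg_def by simp
  next
    case (Suc k)
    have "xhat (Suc k) = ybar k (T k)" and "ybar (Suc k) 0 = ybar k (T k)"
      using ipr unfolding ipr_eg_def Let_def by blast+
    then show ?case using inner_iterates[of k "T k"] Suc by simp
  qed
  then show ?thesis ..
qed

lemma norm_le_Cf:
  assumes "compact X" and "continuous_on X grad" and "x \<in> X"
  shows "norm (grad x) \<le> Cf X grad"
proof -
  have "bounded (grad ` X)"
    using compact_continuous_image[OF assms(2,1)] by (rule compact_imp_bounded)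
  then have "bdd_above ((\<lambda>x. norm (grad x)) ` X)"
    by (simp add: bdd_above_norm[symmetric] image_image)
  then show ?thesis
    unfolding Cf_def by (rule cSUP_upper[OF \<open>x \<in> X\<close>])
qed

lemma L_smooth_on_lipschitz_grad:
  assumes "L_smooth_on X f grad L" and "0 \<le> L"
  shows "L-lipschitz_on X grad"
  using assms unfolding L_smooth_on_def by (intro lipschitz_onI) (auto simp: dist_norm)

lemma mult_le_scaled_squares:
  fixes a b \<epsilon> :: real
  assumes "0 < \<epsilon>"
  shows "a * b \<le> \<epsilon> * a\<^sup>2 / 4 + b\<^sup>2 / \<epsilon>"
proof -
  have "0 \<le> (\<epsilon> * a - 2 * b)\<^sup>2" by simp
  then have "4 * \<epsilon> * (a * b) \<le> \<epsilon>\<^sup>2 * a\<^sup>2 + 4 * b\<^sup>2"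
    by (simp add: power2_eq_square algebra_simps)
  then show ?thesis
    using assms by (simp add: field_simps power2_eq_square)
qed

lemma projected_gradient_residual_bound:
  fixes u d e G :: "'a::real_inner" and g L C D :: real
  assumes proj: "(u - g *\<^sub>R G) \<bullet> (u - e) \<le> 0"
    and descent: "G \<bullet> u - G \<bullet> d - L * ((norm u)\<^sup>2 + (norm d)\<^sup>2) \<le> D"
    and "norm G \<le> C" and "0 < g" and "0 < L" and "g \<le> 1 / (2 * L)"
  shows "(norm u)\<^sup>2 \<le> 4 * g * D + L * g ^ 3 * C\<^sup>2 + 80 / (L * g) * ((norm d)\<^sup>2 + (norm e)\<^sup>2)"
proof -
  define K where "K = 1 / (L * g)"
  have gL: "g * L \<le> 1 / 2" using assms(4-6) by (simp add: field_simps)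
  have "(norm u)\<^sup>2 \<le> u \<bullet> e + g * (G \<bullet> u) - g * (G \<bullet> e)"
    using proj by (simp add: power2_norm_eq_inner inner_diff_left inner_diff_right inner_commute right_diff_distrib)
  moreover have "g * (G \<bullet> u) \<le> g * D + g * (G \<bullet> d) + g * L * (norm u)\<^sup>2 + g * L * (norm d)\<^sup>2"
    using mult_left_mono[OF descent, of g] \<open>0 < g\<close> by (simp add: algebra_simps)
  moreover have "u \<bullet> e \<le> (norm u)\<^sup>2 / 8 + 2 * (norm e)\<^sup>2"
    using norm_cauchy_schwarz[of u e] mult_le_scaled_squares[of "1/2" "norm u" "norm e"] by simp
  moreover have "g * (G \<bullet> d) \<le> g * C * norm d"
  proof -
    have "G \<bullet> d \<le> C * norm d"
      using norm_cauchy_schwarz[of G d] mult_right_mono[OF \<open>norm G \<le> C\<close>, of "norm d"] by simp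
    then show ?thesis using mult_left_mono[of _ _ g] \<open>0 < g\<close> by (simp add: mult.assoc)
  qed
  moreover have "- (g * (G \<bullet> e)) \<le> g * C * norm e"
  proof -
    have "- (G \<bullet> e) \<le> C * norm e"
      using norm_cauchy_schwarz[of "- G" e] mult_right_mono[OF \<open>norm G \<le> C\<close>, of "norm e"] by simp
    then have "g * (- (G \<bullet> e)) \<le> g * (C * norm e)"
      using \<open>0 < g\<close> by (intro mult_left_mono) auto
    then show ?thesis by (simp add: mult.assoc)
  qed
  moreover have "g * L * (norm u)\<^sup>2 \<le> (norm u)\<^sup>2 / 2"
    using mult_right_mono[OF gL, of "(norm u)\<^sup>2"] by (simp add: mult.commute)
  ultimately have "(norm u)\<^sup>2 \<le> 4 * (g * D) + 8 * (norm e)\<^sup>2 + 4 * (g * C * norm d) + 4 * (g * C * norm e)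
      + 4 * (g * L * (norm d)\<^sup>2)"
    using zero_le_power2[of "norm u"] by linarith
  also have "\<dots> \<le> 4 * (g * D) + L * g ^ 3 * C\<^sup>2 + 80 * (K * (norm d)\<^sup>2) + 80 * (K * (norm e)\<^sup>2)"
  proof -
    have young: "g * C * n \<le> L * g ^ 3 * C\<^sup>2 / 8 + 2 * (K * n\<^sup>2)" for n
    proof -
      have "g * (C * n) \<le> g * ((g\<^sup>2 * L / 2) * C\<^sup>2 / 4 + n\<^sup>2 / (g\<^sup>2 * L / 2))"
        using mult_le_scaled_squares[of "g\<^sup>2 * L / 2" C n] assms(4,5) by (intro mult_left_mono) auto
      also have "\<dots> = L * g ^ 3 * C\<^sup>2 / 8 + 2 * (K * n\<^sup>2)"
        using assms(4,5) by (simp add: K_def field_simps power2_eq_square power3_eq_cube)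
      finally show ?thesis by (simp add: mult.assoc)
    qed
    have "8 * (norm e)\<^sup>2 \<le> 4 * (K * (norm e)\<^sup>2)"
      using mult_right_mono[OF gL, of "(norm e)\<^sup>2"] assms(4,5)
      by (simp add: K_def field_simps)
    moreover have "4 * (g * L * (norm d)\<^sup>2) \<le> K * (norm d)\<^sup>2"
    proof -
      have "(g * L) * (g * L) \<le> 1 / 4"
        using mult_mono[OF gL gL] assms(4,5) by simp
      from mult_right_mono[OF this, of "(norm d)\<^sup>2"] show ?thesis
        using assms(4,5) by (simp add: K_def field_simps)
    qed
    moreover have "0 \<le> K * (norm d)\<^sup>2" and "0 \<le> K * (norm e)\<^sup>2"
      using assms(4,5) by (simp_all add: K_def)
    ultimately show ?thesis
      using young[of "norm d"] young[of "norm e"] by linarith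
  qed
  finally show ?thesis by (simp add: K_def algebra_simps)
qed

lemma projected_gradient_residual_sq_le:
  fixes X S :: "'a::euclidean_space set"
  assumes "convex X" and smooth: "L_smooth_on X f grad L" and "0 < L" and "0 < g"
    and "g \<le> 1 / (2 * L)" and "closed S" and "convex S"
    and "x \<in> X" and "x' \<in> X" and "norm (grad x) \<le> C"
  shows "(norm ((1 / g) *\<^sub>R (x - proj S (x - g *\<^sub>R grad x))))\<^sup>2
    \<le> 4 / g * (f x - f x') + L * g * C\<^sup>2
       + 80 / (L * g ^ 3) * ((norm (x' - proj S (x - g *\<^sub>R grad x)))\<^sup>2 + (norm (x - proj S x))\<^sup>2)"
proof -
  define p where "p = proj S (x - g *\<^sub>R grad x)"
  define u d e where "u = x - p" and "d = x' - p" and "e = x - proj S x"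
  have "(u - g *\<^sub>R grad x) \<bullet> (u - e) \<le> 0"
    using closest_point_inner_le[OF \<open>closed S\<close> \<open>convex S\<close>, of "x - g *\<^sub>R grad x" x]
    by (simp add: u_def e_def p_def algebra_simps)
  moreover have "grad x \<bullet> u - grad x \<bullet> d - L * ((norm u)\<^sup>2 + (norm d)\<^sup>2) \<le> f x - f x'"
  proof -
    have "x' - x = d - u" by (simp add: u_def d_def)
    have "(norm (d - u))\<^sup>2 \<le> 2 * ((norm u)\<^sup>2 + (norm d)\<^sup>2)"
    proof -
      have "(norm (d - u))\<^sup>2 + (norm (d + u))\<^sup>2 = 2 * ((norm u)\<^sup>2 + (norm d)\<^sup>2)"
        by (simp add: power2_norm_eq_inner algebra_simps inner_commute)
      then show ?thesis using zero_le_power2[of "norm (d + u)"] by linarith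
    qed
    then have "L / 2 * (norm (d - u))\<^sup>2 \<le> L * ((norm u)\<^sup>2 + (norm d)\<^sup>2)"
      using mult_left_mono[of _ _ "L / 2"] \<open>0 < L\<close> by fastforce
    moreover have "f x' \<le> f x + grad x \<bullet> (d - u) + L / 2 * (norm (d - u))\<^sup>2"
      using L_smooth_on_descent[OF \<open>convex X\<close> smooth \<open>x \<in> X\<close> \<open>x' \<in> X\<close>] \<open>x' - x = d - u\<close> by simp
    ultimately show ?thesis by (simp add: inner_diff_right)
  qed
  ultimately have "(norm u)\<^sup>2 \<le> 4 * g * (f x - f x') + L * g ^ 3 * C\<^sup>2 + 80 / (L * g) * ((norm d)\<^sup>2 + (norm e)\<^sup>2)"
    using projected_gradient_residual_bound assms(3-5,10) by blast
  then have "(norm u)\<^sup>2 / g\<^sup>2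
      \<le> (4 * g * (f x - f x') + L * g ^ 3 * C\<^sup>2 + 80 / (L * g) * ((norm d)\<^sup>2 + (norm e)\<^sup>2)) / g\<^sup>2"
    by (rule divide_right_mono) simp
  also have "\<dots> = 4 / g * (f x - f x') + L * g * C\<^sup>2 + 80 / (L * g ^ 3) * ((norm d)\<^sup>2 + (norm e)\<^sup>2)"
    using \<open>0 < g\<close> \<open>0 < L\<close> by (simp add: field_simps power2_eq_square power3_eq_cube)
  finally show ?thesis
    using \<open>0 < g\<close> by (simp add: u_def d_def e_def p_def power_divide)
qed

theorem proposition5p6:
  fixes X :: "(real ^ 'n) set" and F grad :: "real ^ 'n \<Rightarrow> real ^ 'n" and f :: "real ^ 'n \<Rightarrow> real"
    and LF L \<alpha> M ghat \<gamma> :: real and \<eta> :: "nat \<Rightarrow> real" and T :: "nat \<Rightarrow> nat"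
    and xhat :: "nat \<Rightarrow> real ^ 'n" and x y ybar :: "nat \<Rightarrow> nat \<Rightarrow> real ^ 'n"
    and Gam th :: "nat \<Rightarrow> nat \<Rightarrow> real"
  assumes "X \<noteq> {}" and "compact X" and "convex X"
    and "LF-lipschitz_on X F" and "monotone_op_on X F"
    and "L > 0" and "L_smooth_on X f grad L"
    and "M \<ge> 1" and "weakly_sharp X F \<alpha> M"
    and "ghat > 0" and "ghat \<le> 1 / (2 * L)"
    and "\<gamma> > 0" and "\<And>k. \<eta> k > 0" and "\<And>k. \<gamma> * \<eta> k < 2"
    and "ipr_eg X F grad ghat \<gamma> \<eta> T xhat x y ybar Gam th"
  shows "\<forall>k. (norm (residual X F grad ghat (xhat k)))\<^sup>2
    \<le> 4 / ghat * (f (xhat k) - f (xhat (Suc k))) + L * ghat * (Cf X grad)\<^sup>2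
       + 80 / (L * ghat ^ 3) *
         ((norm (xhat (Suc k) - proj (SOL X F) (xhat k - ghat *\<^sub>R grad (xhat k))))\<^sup>2
          + (norm (xhat k - proj (SOL X F) (xhat k)))\<^sup>2)"
proof
  fix k
  have "closed X" using \<open>compact X\<close> by (rule compact_imp_closed)
  have F_cont: "continuous_on X F"
    using \<open>LF-lipschitz_on X F\<close> by (rule lipschitz_on_continuous_on)
  have grad_cont: "continuous_on X grad"
    using L_smooth_on_lipschitz_grad[OF \<open>L_smooth_on X f grad L\<close>] \<open>L > 0\<close>
    by (intro lipschitz_on_continuous_on) auto
  have xhat_in: "xhat j \<in> X" for j
    using ipr_eg_outer_iterates_in[OF \<open>X \<noteq> {}\<close> \<open>closed X\<close> \<open>convex X\<close>] assms(14,15) .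
  show "(norm (residual X F grad ghat (xhat k)))\<^sup>2
    \<le> 4 / ghat * (f (xhat k) - f (xhat (Suc k))) + L * ghat * (Cf X grad)\<^sup>2
       + 80 / (L * ghat ^ 3) *
         ((norm (xhat (Suc k) - proj (SOL X F) (xhat k - ghat *\<^sub>R grad (xhat k))))\<^sup>2
          + (norm (xhat k - proj (SOL X F) (xhat k)))\<^sup>2)"
    unfolding residual_def
    using projected_gradient_residual_sq_le[OF \<open>convex X\<close> \<open>L_smooth_on X f grad L\<close> \<open>L > 0\<close>
        \<open>ghat > 0\<close> \<open>ghat \<le> 1 / (2 * L)\<close>
        SOL_closed[OF \<open>convex X\<close> F_cont \<open>monotone_op_on X F\<close> \<open>closed X\<close>]
        SOL_convex[OF \<open>convex X\<close> F_cont \<open>monotone_op_on X F\<close>]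
        xhat_in xhat_in norm_le_Cf[OF \<open>compact X\<close> grad_cont xhat_in]] .
qed

end
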